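(* Let $k\ge 1$ be an integer and let $w\in\mathbb{R}$. The sets \[ S=\{\xi\in\mathbb{R}\,;\,\omega_k(\xi)\ge w\}\quad\text{and}\quad S^{\mathrm{lead}}=\{\xi\in\mathbb{R}\,;\,\omega^{\mathrm{lead}}_k(\xi)\ge w\} \] have the same Hausdorff dimension. The same holds if the inequalities $\ge$ are replaced by strict inequalities $>$ in the definitions of $S$ and $S^{\mathrm{lead}}$.
   Context: For a polynomial $P\in\mathbb{Z}[x]$, $\|P\|$ denotes the largest absolute value of its coefficients, and $c_k(P)$ denotes the coefficient of $x^k$ in $P$. For $\xi\in\mathbb{R}$ and an integer $k\ge 1$, $\omega_k(\xi)$ is the supremum of all $\omega\in\mathbb{R}$ for which there exist infinitely many non-zero polynomials $P\in\mathbb{Z}[x]$ of degree at most $k$ with $|P(\xi)|\le\|P\|^{-\omega}$. The quantity $\omega^{\mathrm{lead}}_k(\xi)$ is defined in the same way as $\omega_k(\xi)$, except that one restricts to non-zero polynomials $P\in\mathbb{Z}[x]$ of degree at most $k$ satisfying $|c_k(P)|=\|P\|$. *)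

theory Defs
  imports "HOL-Analysis.Analysis" "HOL-Computational_Algebra.Polynomial"
begin

definition poly_height :: "int poly \<Rightarrow> int" where
  "poly_height P = Max {\<bar>coeff P i\<bar> | i. i \<le> degree P}"

definition omega :: "nat \<Rightarrow> real \<Rightarrow> ereal" where
  "omega k \<xi> = Sup {ereal \<omega> | \<omega>.
     infinite {P :: int poly. P \<noteq> 0 \<and> degree P \<le> k \<and>
        \<bar>poly (map_poly real_of_int P) \<xi>\<bar> \<le> real_of_int (poly_height P) powr (- \<omega>)}}"

definition omega_lead :: "nat \<Rightarrow> real \<Rightarrow> ereal" where
  "omega_lead k \<xi> = Sup {ereal \<omega> | \<omega>.
     infinite {P :: int poly. P \<noteq> 0 \<and> degree P \<le> k \<and> \<bar>coeff P k\<bar> = poly_height P \<and>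
        \<bar>poly (map_poly real_of_int P) \<xi>\<bar> \<le> real_of_int (poly_height P) powr (- \<omega>)}}"

definition hausdorff_pre :: "real \<Rightarrow> real \<Rightarrow> real set \<Rightarrow> ennreal" where
  "hausdorff_pre s \<delta> A = Inf {(\<Sum>i. ennreal (diameter (U i) powr s)) | U :: nat \<Rightarrow> real set.
       A \<subseteq> (\<Union>i. U i) \<and> (\<forall>i. bounded (U i) \<and> diameter (U i) \<le> \<delta>)}"

definition hausdorff_measure :: "real \<Rightarrow> real set \<Rightarrow> ennreal" where
  "hausdorff_measure s A = (SUP \<delta>\<in>{0<..}. hausdorff_pre s \<delta> A)"

text \<open>Hausdorff dimension: infimum of the s > 0 with H^s(A) = 0
  (for A a subset of the reals this set contains every s > 1).\<close>
definition hausdorff_dim :: "real set \<Rightarrow> real" where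
  "hausdorff_dim A = Inf {s. s > 0 \<and> hausdorff_measure s A = 0}"

end

(*
  Since omega_lead k xi <= omega k xi, the set S^lead is contained in S.  Conversely, fix xi
  outside {0, ..., k} and an integer polynomial P of degree at most k, and pick the node m in
  {0, ..., k} where |P(m)| is largest; Lagrange interpolation at these nodes makes |P(m)|
  comparable to the height of P.  The integer polynomial Q(x) = (N x)^k P(m + 1/(N x)) satisfies
  Q(T) = P(xi) / (xi - m)^k at T = 1/(N (xi - m)) and has leading coefficient N^k P(m); for N
  large this coefficient dominates the others, so |c_k(Q)| = ||Q|| and ||Q|| is comparable to
  ||P||.  Hence omega_k(xi) <= omega^lead_k(T) for one of the k + 1 choices of m, and S is
  covered by a finite set and the images of S^lead under the maps y -> m + 1/(N y).  These maps
  are Lipschitz on each set {|y| >= r}, so they preserve H^s-null sets; thus S and S^lead are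
  H^s-null for the same s > 0, which determines the Hausdorff dimension.
*)
theory Submission
  imports Defs
begin

section \<open>Heights of integer polynomials\<close>

abbreviation rpoly :: "int poly \<Rightarrow> real \<Rightarrow> real" where
  "rpoly P x \<equiv> poly (map_poly real_of_int P) x"

lemma poly_eq_sum_atMost:
  fixes q :: "'a::comm_semiring_1 poly"
  assumes "degree q \<le> n"
  shows "poly q x = (\<Sum>i\<le>n. coeff q i * x ^ i)"
proof -
  have "poly q x = (\<Sum>i\<le>degree q. coeff q i * x ^ i)" by (rule poly_altdef)
  also have "\<dots> = (\<Sum>i\<le>n. coeff q i * x ^ i)"
    by (rule sum.mono_neutral_left) (use assms in \<open>auto simp: coeff_eq_0\<close>)
  finally show ?thesis .
qed

lemma rpoly_eq_sum_atMost:
  assumes "degree P \<le> n"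
  shows "rpoly P x = (\<Sum>i\<le>n. real_of_int (coeff P i) * x ^ i)"
proof -
  have "degree (map_poly real_of_int P) \<le> n"
    using assms map_poly_degree_leq order_trans by blast
  then show ?thesis by (simp add: poly_eq_sum_atMost coeff_map_poly)
qed

lemma rpoly_of_int: "rpoly P (of_int x) = of_int (poly P x)"
  by (subst rpoly_eq_sum_atMost[OF order_refl]) (simp add: poly_altdef)

lemma map_poly_of_int_mult:
  "map_poly (of_int :: int \<Rightarrow> 'a::comm_ring_1) (p * q) = map_poly of_int p * map_poly of_int q"
  by (rule poly_eqI) (simp add: coeff_map_poly coeff_mult)

lemma map_poly_of_int_power:
  "map_poly (of_int :: int \<Rightarrow> 'a::comm_ring_1) (p ^ n) = map_poly of_int p ^ n"
  by (induction n) (simp_all add: map_poly_of_int_mult)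

lemma abs_coeff_le_poly_height: "\<bar>coeff P i\<bar> \<le> poly_height P"
proof -
  have fin: "finite {\<bar>coeff P i\<bar> | i. i \<le> degree P}" by simp
  show ?thesis
  proof (cases "i \<le> degree P")
    case True
    then show ?thesis unfolding poly_height_def by (intro Max_ge[OF fin]) auto
  next
    case False
    then have "coeff P i = 0" by (simp add: coeff_eq_0)
    moreover have "\<bar>coeff P 0\<bar> \<le> poly_height P"
      unfolding poly_height_def by (intro Max_ge[OF fin]) auto
    ultimately show ?thesis by simp
  qed
qed

lemma abs_of_int_coeff_le_poly_height: "\<bar>real_of_int (coeff P i)\<bar> \<le> real_of_int (poly_height P)"
  using abs_coeff_le_poly_height[of P i] by linarith

lemma poly_height_attained: "\<exists>i. poly_height P = \<bar>coeff P i\<bar>"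
proof -
  have "poly_height P \<in> {\<bar>coeff P i\<bar> | i. i \<le> degree P}"
    unfolding poly_height_def by (rule Max_in) auto
  then show ?thesis by auto
qed

lemma poly_height_nonneg: "poly_height P \<ge> 0"
  using abs_coeff_le_poly_height[of P 0] by linarith

lemma poly_height_0 [simp]: "poly_height 0 = 0"
  using poly_height_attained[of 0] by simp

lemma poly_height_ge_1: "P \<noteq> 0 \<Longrightarrow> poly_height P \<ge> 1"
  using abs_coeff_le_poly_height[of P "degree P"] leading_coeff_neq_0[of P] by linarith

lemma poly_height_eq_dominant_coeff:
  assumes "\<And>j. \<bar>coeff Q j\<bar> \<le> \<bar>coeff Q k\<bar>"
  shows "poly_height Q = \<bar>coeff Q k\<bar>"
  using poly_height_attained[of Q] abs_coeff_le_poly_height[of Q k] assms by (metis antisym)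

lemma finite_poly_height_le:
  "finite {Q :: int poly. degree Q \<le> k \<and> real_of_int (poly_height Q) \<le> B}"
proof -
  define b where "b = \<lceil>B\<rceil>"
  have "{Q :: int poly. degree Q \<le> k \<and> real_of_int (poly_height Q) \<le> B}
     \<subseteq> Poly ` {xs. set xs \<subseteq> {-b..b} \<and> length xs = Suc k}"
  proof
    fix Q :: "int poly" assume "Q \<in> {Q. degree Q \<le> k \<and> real_of_int (poly_height Q) \<le> B}"
    then have deg: "degree Q \<le> k" and height: "poly_height Q \<le> b"
      unfolding b_def by auto linarith
    have "Q = Poly (map (coeff Q) [0..<Suc k])"
      by (rule poly_eqI) (use deg in \<open>auto simp: nth_default_def coeff_eq_0 simp del: upt_Suc\<close>)
    moreover have "-b \<le> coeff Q i \<and> coeff Q i \<le> b" for i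
      using abs_coeff_le_poly_height[of Q i] height by linarith
    then have "set (map (coeff Q) [0..<Suc k]) \<subseteq> {-b..b}" by auto
    ultimately show "Q \<in> Poly ` {xs. set xs \<subseteq> {-b..b} \<and> length xs = Suc k}" by force
  qed
  moreover have "finite (Poly ` {xs. set xs \<subseteq> {-b..b} \<and> length xs = Suc k})"
    by (intro finite_imageI finite_lists_length_eq) simp
  ultimately show ?thesis by (rule finite_subset)
qed

section \<open>Lagrange interpolation at the nodes 0, ..., k\<close>

definition lagrange_basis :: "nat \<Rightarrow> nat \<Rightarrow> real poly" where
  "lagrange_basis k l =
     smult (1 / (\<Prod>i\<in>{..k}-{l}. (real l - real i))) (\<Prod>i\<in>{..k}-{l}. [:- real i, 1:])"

lemma poly_lagrange_basis:
  "poly (lagrange_basis k l) x = (\<Prod>i\<in>{..k}-{l}. (x - real i)) / (\<Prod>i\<in>{..k}-{l}. (real l - real i))"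
  by (simp add: lagrange_basis_def poly_prod)

lemma poly_lagrange_basis_same: "poly (lagrange_basis k l) (real l) = 1"
proof -
  have "(\<Prod>i\<in>{..k}-{l}. (real l - real i)) \<noteq> 0"
    by (subst prod_zero_iff) auto
  then show ?thesis by (simp add: poly_lagrange_basis)
qed

lemma poly_lagrange_basis_other:
  assumes "l' \<le> k" "l' \<noteq> l"
  shows "poly (lagrange_basis k l) (real l') = 0"
proof -
  have "(\<Prod>i\<in>{..k}-{l}. (real l' - real i)) = 0"
    by (rule prod_zero) (use assms in auto)
  then show ?thesis by (simp add: poly_lagrange_basis)
qed

lemma degree_lagrange_basis:
  assumes "l \<le> k"
  shows "degree (lagrange_basis k l) \<le> k"
proof -
  have "degree (\<Prod>i\<in>{..k}-{l}. [:- real i, 1:]) \<le> (\<Sum>i\<in>{..k}-{l}. degree [:- real i, 1:])"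
    using degree_prod_sum_le[of "{..k}-{l}" "\<lambda>i. [:- real i, 1:]"] by (simp add: o_def)
  also have "\<dots> \<le> k"
    using assms by (simp add: card_Diff_singleton)
  finally show ?thesis
    unfolding lagrange_basis_def using degree_smult_le order_trans by blast
qed

lemma lagrange_interpolation:
  fixes p :: "real poly"
  assumes "degree p \<le> k"
  shows "p = (\<Sum>l\<le>k. smult (poly p (real l)) (lagrange_basis k l))"
proof (rule ccontr)
  define D where "D = p - (\<Sum>l\<le>k. smult (poly p (real l)) (lagrange_basis k l))"
  assume "p \<noteq> (\<Sum>l\<le>k. smult (poly p (real l)) (lagrange_basis k l))"
  then have "D \<noteq> 0" unfolding D_def by simp
  have "degree (\<Sum>l\<le>k. smult (poly p (real l)) (lagrange_basis k l)) \<le> k"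
    by (rule degree_sum_le) (auto intro: order_trans[OF degree_smult_le] degree_lagrange_basis)
  then have "degree D \<le> k" unfolding D_def using assms degree_diff_le by blast
  have "poly D (real l') = 0" if "l' \<le> k" for l'
  proof -
    have "(\<Sum>l\<le>k. poly p (real l) * poly (lagrange_basis k l) (real l')) =
          (\<Sum>l\<in>{l'}. poly p (real l) * poly (lagrange_basis k l) (real l'))"
      by (rule sum.mono_neutral_right) (use that poly_lagrange_basis_other in auto)
    then show ?thesis by (simp add: D_def poly_sum poly_lagrange_basis_same)
  qed
  then have "real ` {..k} \<subseteq> {x. poly D x = 0}" by auto
  then have "card (real ` {..k}) \<le> card {x. poly D x = 0}"
    by (rule card_mono[OF poly_roots_finite[OF \<open>D \<noteq> 0\<close>]])
  also have "\<dots> \<le> degree D" by (rule card_poly_roots_bound[OF \<open>D \<noteq> 0\<close>])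
  finally show False using \<open>degree D \<le> k\<close> by (simp add: card_image)
qed

lemma coeff_bounded_by_values_at_nodes:
  obtains L :: real where "L \<ge> 0"
    and "\<And>p M j. degree p \<le> k \<Longrightarrow> (\<And>l. l \<le> k \<Longrightarrow> \<bar>poly p (real l)\<bar> \<le> M) \<Longrightarrow>
           \<bar>coeff p j\<bar> \<le> L * M"
proof
  define L where "L = (\<Sum>j\<le>k. \<Sum>l\<le>k. \<bar>coeff (lagrange_basis k l) j\<bar>)"
  show "L \<ge> 0" unfolding L_def by (intro sum_nonneg) auto
  fix p :: "real poly" and M j
  assume deg: "degree p \<le> k" and M: "\<And>l. l \<le> k \<Longrightarrow> \<bar>poly p (real l)\<bar> \<le> M"
  have "0 \<le> M" using M[of 0] by linarith
  show "\<bar>coeff p j\<bar> \<le> L * M"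
  proof (cases "j \<le> k")
    case False
    then show ?thesis using deg \<open>0 \<le> M\<close> \<open>L \<ge> 0\<close> by (simp add: coeff_eq_0)
  next
    case True
    have "coeff p j = (\<Sum>l\<le>k. poly p (real l) * coeff (lagrange_basis k l) j)"
      by (subst lagrange_interpolation[OF deg]) (simp add: coeff_sum)
    also have "\<bar>\<dots>\<bar> \<le> (\<Sum>l\<le>k. \<bar>poly p (real l) * coeff (lagrange_basis k l) j\<bar>)"
      by (rule sum_abs)
    also have "\<dots> \<le> (\<Sum>l\<le>k. M * \<bar>coeff (lagrange_basis k l) j\<bar>)"
      by (rule sum_mono) (use M in \<open>auto simp: abs_mult intro: mult_right_mono\<close>)
    also have "\<dots> = M * (\<Sum>l\<le>k. \<bar>coeff (lagrange_basis k l) j\<bar>)"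
      by (simp add: sum_distrib_left)
    also have "\<dots> \<le> M * L"
      unfolding L_def using True \<open>0 \<le> M\<close>
      by (intro mult_left_mono member_le_sum[where f="\<lambda>j. \<Sum>l\<le>k. \<bar>coeff (lagrange_basis k l) j\<bar>"])
         (auto intro: sum_nonneg)
    finally show ?thesis by (simp add: mult.commute)
  qed
qed

section \<open>The Moebius transform of a polynomial\<close>

definition reversed_shift_basis :: "nat \<Rightarrow> nat \<Rightarrow> nat \<Rightarrow> int poly" where
  "reversed_shift_basis k m i = monom 1 (k - i) * [:1, int m:] ^ i"

definition reversed_shift :: "nat \<Rightarrow> nat \<Rightarrow> int poly \<Rightarrow> int poly" where
  "reversed_shift k m P = (\<Sum>i\<le>k. smult (coeff P i) (reversed_shift_basis k m i))"

definition mobius_poly :: "nat \<Rightarrow> nat \<Rightarrow> nat \<Rightarrow> int poly \<Rightarrow> int poly" where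
  "mobius_poly k N m P = reversed_shift k m P \<circ>\<^sub>p [:0, int N:]"

definition mobius :: "nat \<Rightarrow> nat \<Rightarrow> real \<Rightarrow> real" where
  "mobius N m \<xi> = 1 / (real N * (\<xi> - real m))"

lemma degree_coeff_linear_power:
  "degree ([:1, a:] ^ i) \<le> i \<and> coeff ([:1, a::int:] ^ i) i = a ^ i"
proof (induction i)
  case 0
  then show ?case by simp
next
  case (Suc i)
  have "[:1, a:] ^ Suc i = [:1, a:] ^ i + pCons 0 (smult a ([:1, a:] ^ i))"
    by (simp add: algebra_simps)
  moreover have "degree ([:1, a:] ^ Suc i) \<le> Suc i"
    using degree_power_le[of "[:1,a:]" "Suc i"] by (auto intro: order_trans)
  moreover have "coeff ([:1, a:] ^ i) (Suc i) = 0"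
    using Suc.IH by (simp add: coeff_eq_0)
  ultimately show ?case using Suc.IH by simp
qed

lemma degree_reversed_shift_basis:
  assumes "i \<le> k"
  shows "degree (reversed_shift_basis k m i) \<le> k"
proof -
  have "degree (reversed_shift_basis k m i) \<le> degree (monom (1::int) (k - i)) + degree ([:1, int m:] ^ i)"
    unfolding reversed_shift_basis_def by (rule degree_mult_le)
  also have "\<dots> \<le> (k - i) + i"
    using degree_coeff_linear_power[of "int m" i] by (intro add_mono) (auto simp: degree_monom_le)
  finally show ?thesis using assms by simp
qed

lemma coeff_reversed_shift_basis_top: "i \<le> k \<Longrightarrow> coeff (reversed_shift_basis k m i) k = int m ^ i"
  using degree_coeff_linear_power[of "int m" i] by (simp add: reversed_shift_basis_def coeff_monom_mult)

lemma rpoly_reversed_shift_basis: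
  "rpoly (reversed_shift_basis k m i) y = y ^ (k - i) * (1 + real m * y) ^ i"
  by (simp add: reversed_shift_basis_def map_poly_of_int_mult map_poly_of_int_power
      map_poly_monom map_poly_pCons poly_monom algebra_simps)

lemma degree_reversed_shift: "degree (reversed_shift k m P) \<le> k"
  unfolding reversed_shift_def
  by (rule degree_sum_le) (auto intro: order_trans[OF degree_smult_le] degree_reversed_shift_basis)

lemma coeff_reversed_shift:
  "coeff (reversed_shift k m P) j = (\<Sum>i\<le>k. coeff P i * coeff (reversed_shift_basis k m i) j)"
  by (simp add: reversed_shift_def coeff_sum)

lemma coeff_reversed_shift_top:
  "degree P \<le> k \<Longrightarrow> coeff (reversed_shift k m P) k = poly P (int m)"
  by (simp add: coeff_reversed_shift coeff_reversed_shift_basis_top poly_eq_sum_atMost)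

lemma rpoly_reversed_shift:
  assumes "degree P \<le> k" and "y \<noteq> 0"
  shows "rpoly (reversed_shift k m P) y = y ^ k * rpoly P (real m + 1 / y)"
proof -
  have basis: "y ^ (k - i) * (1 + real m * y) ^ i = y ^ k * (real m + 1 / y) ^ i" if "i \<le> k" for i
  proof -
    have "1 + real m * y = y * (real m + 1 / y)" using assms(2) by (simp add: field_simps)
    then show ?thesis
      using that by (simp add: power_mult_distrib power_add[symmetric] mult.assoc)
  qed
  have "rpoly (reversed_shift k m P) y = (\<Sum>j\<le>k. real_of_int (coeff (reversed_shift k m P) j) * y ^ j)"
    by (rule rpoly_eq_sum_atMost[OF degree_reversed_shift])
  also have "\<dots> = (\<Sum>j\<le>k. \<Sum>i\<le>k. real_of_int (coeff P i) * (real_of_int (coeff (reversed_shift_basis k m i) j) * y ^ j))"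
    by (simp add: coeff_reversed_shift sum_distrib_right mult.assoc)
  also have "\<dots> = (\<Sum>i\<le>k. real_of_int (coeff P i) * rpoly (reversed_shift_basis k m i) y)"
    by (subst sum.swap) (simp add: rpoly_eq_sum_atMost[OF degree_reversed_shift_basis] sum_distrib_left)
  also have "\<dots> = (\<Sum>i\<le>k. real_of_int (coeff P i) * (y ^ k * (real m + 1 / y) ^ i))"
    by (rule sum.cong[OF refl]) (simp only: rpoly_reversed_shift_basis basis atMost_iff)
  also have "\<dots> = y ^ k * rpoly P (real m + 1 / y)"
    by (simp add: rpoly_eq_sum_atMost[OF assms(1)] sum_distrib_left ac_simps)
  finally show ?thesis .
qed

lemma coeff_mobius_poly: "coeff (mobius_poly k N m P) j = int N ^ j * coeff (reversed_shift k m P) j"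
  by (simp add: mobius_poly_def coeff_pcompose_linear)

lemma degree_mobius_poly: "degree (mobius_poly k N m P) \<le> k"
proof (rule degree_le, intro allI impI)
  fix j assume "k < j"
  then have "coeff (reversed_shift k m P) j = 0"
    using degree_reversed_shift[of k m P] by (simp add: coeff_eq_0)
  then show "coeff (mobius_poly k N m P) j = 0" by (simp add: coeff_mobius_poly)
qed

lemma mobius_eq_0_iff: "mobius N m \<xi> = 0 \<longleftrightarrow> N = 0 \<or> \<xi> = real m"
  by (simp add: mobius_def)

lemma mobius_inverse: "N > 0 \<Longrightarrow> \<xi> \<noteq> real m \<Longrightarrow> real m + 1 / (real N * mobius N m \<xi>) = \<xi>"
  by (simp add: mobius_def)

lemma rpoly_mobius_poly:
  assumes "degree P \<le> k" and "\<xi> \<noteq> real m" and "N > 0"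
  shows "rpoly (mobius_poly k N m P) (mobius N m \<xi>) = rpoly P \<xi> / (\<xi> - real m) ^ k"
proof -
  have scale: "rpoly (mobius_poly k N m P) x = rpoly (reversed_shift k m P) (real N * x)" for x
    by (simp add: rpoly_eq_sum_atMost[OF degree_mobius_poly] rpoly_eq_sum_atMost[OF degree_reversed_shift]
        coeff_mobius_poly power_mult_distrib algebra_simps)
  have "real N * mobius N m \<xi> = 1 / (\<xi> - real m)"
    using assms by (simp add: mobius_def)
  then have "rpoly (mobius_poly k N m P) (mobius N m \<xi>) = rpoly (reversed_shift k m P) (1 / (\<xi> - real m))"
    by (simp only: scale)
  also have "\<dots> = (1 / (\<xi> - real m)) ^ k * rpoly P (real m + 1 / (1 / (\<xi> - real m)))"
    by (rule rpoly_reversed_shift) (use assms in auto)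
  also have "\<dots> = rpoly P \<xi> / (\<xi> - real m) ^ k"
    by (simp add: power_one_over)
  finally show ?thesis .
qed

lemma inj_on_mobius_poly:
  assumes "N > 0"
  shows "inj_on (mobius_poly k N m) {P. degree P \<le> k}"
proof (rule inj_onI)
  fix P1 P2 assume P1: "P1 \<in> {P. degree P \<le> k}" and P2: "P2 \<in> {P. degree P \<le> k}"
    and eq: "mobius_poly k N m P1 = mobius_poly k N m P2"
  define D where "D = map_poly real_of_int P1 - map_poly real_of_int P2"
  have "poly D x = 0" if "x \<noteq> real m" for x
    using rpoly_mobius_poly[of P1 k x m N] rpoly_mobius_poly[of P2 k x m N] P1 P2 eq assms that
    by (simp add: D_def)
  then have "D = 0"
    using poly_roots_finite[of D] finite_subset[of "UNIV - {real m}" "{x. poly D x = 0}"]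
    by (auto simp: infinite_UNIV_char_0)
  then show "P1 = P2"
    by (intro poly_eqI) (simp add: D_def poly_eq_iff coeff_map_poly)
qed

lemma abs_coeff_reversed_shift_le:
  obtains B :: real where "B \<ge> 0"
    and "\<And>m P j. m \<le> k \<Longrightarrow>
           \<bar>real_of_int (coeff (reversed_shift k m P) j)\<bar> \<le> B * real_of_int (poly_height P)"
proof
  define b where "b m j = (\<Sum>i\<le>k. \<bar>real_of_int (coeff (reversed_shift_basis k m i) j)\<bar>)" for m j
  define B where "B = (\<Sum>m\<le>k. \<Sum>j\<le>k. b m j)"
  show "B \<ge> 0" unfolding B_def b_def by (intro sum_nonneg) auto
  fix m P j assume "m \<le> k"
  have H: "0 \<le> real_of_int (poly_height P)"
    using poly_height_nonneg[of P] by simp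
  show "\<bar>real_of_int (coeff (reversed_shift k m P) j)\<bar> \<le> B * real_of_int (poly_height P)"
  proof (cases "j \<le> k")
    case False
    then show ?thesis
      using degree_reversed_shift[of k m P] H \<open>B \<ge> 0\<close> by (simp add: coeff_eq_0)
  next
    case True
    have "\<bar>real_of_int (coeff (reversed_shift k m P) j)\<bar> \<le>
          (\<Sum>i\<le>k. \<bar>real_of_int (coeff P i) * real_of_int (coeff (reversed_shift_basis k m i) j)\<bar>)"
      unfolding coeff_reversed_shift of_int_sum of_int_mult by (rule sum_abs)
    also have "\<dots> \<le> (\<Sum>i\<le>k. real_of_int (poly_height P) * \<bar>real_of_int (coeff (reversed_shift_basis k m i) j)\<bar>)"
      by (rule sum_mono) (simp add: abs_mult mult_right_mono abs_of_int_coeff_le_poly_height)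
    also have "\<dots> = b m j * real_of_int (poly_height P)"
      by (simp add: b_def sum_distrib_left mult.commute)
    also have "\<dots> \<le> B * real_of_int (poly_height P)"
    proof (rule mult_right_mono[OF _ H])
      have "b m j \<le> (\<Sum>j\<le>k. b m j)"
        using True by (intro member_le_sum) (auto simp: b_def intro: sum_nonneg)
      also have "\<dots> \<le> B"
        unfolding B_def using \<open>m \<le> k\<close>
        by (intro member_le_sum[where f="\<lambda>m. \<Sum>j\<le>k. b m j"]) (auto simp: b_def intro: sum_nonneg)
      finally show "b m j \<le> B" .
    qed
    finally show ?thesis .
  qed
qed

lemma abs_poly_at_node_le:
  assumes "degree P \<le> k" and "m \<le> k"
  shows "\<bar>real_of_int (poly P (int m))\<bar> \<le> (\<Sum>i\<le>k. real k ^ i) * real_of_int (poly_height P)"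
proof -
  have "\<bar>real_of_int (poly P (int m))\<bar> = \<bar>\<Sum>i\<le>k. real_of_int (coeff P i) * real m ^ i\<bar>"
    using rpoly_of_int[of P "int m"] rpoly_eq_sum_atMost[OF assms(1), of "real m"] by simp
  also have "\<dots> \<le> (\<Sum>i\<le>k. \<bar>real_of_int (coeff P i) * real m ^ i\<bar>)"
    by (rule sum_abs)
  also have "\<dots> \<le> (\<Sum>i\<le>k. real_of_int (poly_height P) * real k ^ i)"
    by (rule sum_mono)
       (use assms(2) in \<open>auto simp: abs_mult abs_of_int_coeff_le_poly_height poly_height_nonneg
           intro!: mult_mono power_mono\<close>)
  finally show ?thesis by (simp add: sum_distrib_left mult.commute)
qed

lemma poly_height_le_max_value_at_nodes:
  obtains K :: real where "K > 0"
    and "\<And>P m. degree P \<le> k \<Longrightarrow> (\<And>l. l \<le> k \<Longrightarrow> \<bar>poly P (int l)\<bar> \<le> \<bar>poly P (int m)\<bar>) \<Longrightarrow>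
           real_of_int (poly_height P) \<le> K * \<bar>real_of_int (poly P (int m))\<bar>"
proof -
  obtain L where "L \<ge> 0" and L: "\<And>p M j. degree p \<le> k \<Longrightarrow>
      (\<And>l. l \<le> k \<Longrightarrow> \<bar>poly p (real l)\<bar> \<le> M) \<Longrightarrow> \<bar>coeff p j\<bar> \<le> L * M"
    using coeff_bounded_by_values_at_nodes by blast
  show ?thesis
  proof
    show "L + 1 > 0" using \<open>L \<ge> 0\<close> by simp
    fix P m
    assume deg: "degree P \<le> k" and max: "\<And>l. l \<le> k \<Longrightarrow> \<bar>poly P (int l)\<bar> \<le> \<bar>poly P (int m)\<bar>"
    have "degree (map_poly real_of_int P) \<le> k"
      using deg map_poly_degree_leq order_trans by blast
    moreover have "\<bar>rpoly P (real l)\<bar> \<le> \<bar>real_of_int (poly P (int m))\<bar>" if "l \<le> k" for l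
      using rpoly_of_int[of P "int l"] max[OF that] by simp
    ultimately have coeffs: "\<bar>real_of_int (coeff P j)\<bar> \<le> L * \<bar>real_of_int (poly P (int m))\<bar>" for j
      using L[of "map_poly real_of_int P"] by (simp add: coeff_map_poly)
    obtain i where "poly_height P = \<bar>coeff P i\<bar>" using poly_height_attained by blast
    then have "real_of_int (poly_height P) \<le> L * \<bar>real_of_int (poly P (int m))\<bar>"
      using coeffs[of i] by simp
    then show "real_of_int (poly_height P) \<le> (L + 1) * \<bar>real_of_int (poly P (int m))\<bar>"
      by (simp add: distrib_right)
  qed
qed

definition lead_dominant_comparable :: "nat \<Rightarrow> real \<Rightarrow> real \<Rightarrow> int poly \<Rightarrow> int poly \<Rightarrow> bool" where
  "lead_dominant_comparable k K C P Q \<longleftrightarrow>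
     \<bar>coeff Q k\<bar> = poly_height Q \<and>
     real_of_int (poly_height P) \<le> K * real_of_int (poly_height Q) \<and>
     real_of_int (poly_height Q) \<le> C * real_of_int (poly_height P)"

lemma lead_dominant_comparable_mobius_poly:
  assumes "P \<noteq> 0" and deg: "degree P \<le> k" and "m \<le> k" and "N > 0" and "K > 0" and "B \<ge> 0"
    and B: "\<And>j. \<bar>real_of_int (coeff (reversed_shift k m P) j)\<bar> \<le> B * real_of_int (poly_height P)"
    and HP: "real_of_int (poly_height P) \<le> K * \<bar>real_of_int (poly P (int m))\<bar>"
    and "B * K \<le> real N"
  shows "lead_dominant_comparable k K (real N ^ k * (\<Sum>i\<le>k. real k ^ i)) P (mobius_poly k N m P)"
proof -
  define v where "v = \<bar>real_of_int (poly P (int m))\<bar>"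
  define Q where "Q = mobius_poly k N m P"
  have "real_of_int (poly_height P) \<ge> 1" using poly_height_ge_1[OF \<open>P \<noteq> 0\<close>] by simp
  then have "v \<noteq> 0" using HP by (auto simp: v_def)
  then have "v > 0" by (simp add: v_def)
  have top: "\<bar>real_of_int (coeff Q k)\<bar> = real N ^ k * v"
    by (simp add: Q_def v_def coeff_mobius_poly coeff_reversed_shift_top[OF deg] abs_mult)
  have "\<bar>real_of_int (coeff Q j)\<bar> \<le> \<bar>real_of_int (coeff Q k)\<bar>" for j
  proof (cases "j < k")
    case True
    have "\<bar>real_of_int (coeff Q j)\<bar> = real N ^ j * \<bar>real_of_int (coeff (reversed_shift k m P) j)\<bar>"
      by (simp add: Q_def coeff_mobius_poly abs_mult)
    also have "\<dots> \<le> real N ^ (k - 1) * (B * (K * v))"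
      using B[of j] HP \<open>N > 0\<close> True \<open>B \<ge> 0\<close> unfolding v_def
      by (intro mult_mono power_increasing order_trans[OF _ mult_left_mono[OF HP]]) auto
    also have "\<dots> \<le> real N ^ (k - 1) * (real N * v)"
      using mult_right_mono[OF \<open>B * K \<le> real N\<close>, of v] \<open>v > 0\<close>
      by (intro mult_left_mono) (simp_all add: mult.assoc)
    also have "\<dots> = \<bar>real_of_int (coeff Q k)\<bar>"
      using True by (simp add: top power_eq_if)
    finally show ?thesis .
  next
    case False
    then show ?thesis
      using degree_mobius_poly[of k N m P] by (cases "j = k") (simp_all add: Q_def coeff_eq_0)
  qed
  then have HQ: "poly_height Q = \<bar>coeff Q k\<bar>"
    by (intro poly_height_eq_dominant_coeff) (simp only: of_int_abs[symmetric] of_int_le_iff)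
  then have HQ_real: "real_of_int (poly_height Q) = real N ^ k * v"
    using top by simp
  have "v \<le> real N ^ k * v" using \<open>v > 0\<close> \<open>N > 0\<close> by simp
  then have "real_of_int (poly_height P) \<le> K * real_of_int (poly_height Q)"
    using HP \<open>K > 0\<close> unfolding HQ_real v_def by (meson mult_left_mono less_imp_le order_trans)
  moreover have "real_of_int (poly_height Q) \<le> real N ^ k * (\<Sum>i\<le>k. real k ^ i) * real_of_int (poly_height P)"
    using mult_left_mono[OF abs_poly_at_node_le[OF deg \<open>m \<le> k\<close>], of "real N ^ k"]
    unfolding HQ_real by (simp add: v_def mult.assoc)
  ultimately show ?thesis
    unfolding lead_dominant_comparable_def using HQ by (auto simp: Q_def)
qed

lemma exists_lead_dominant_mobius_poly:
  obtains N :: nat and K C :: real where "N > 0" and "K > 0" and "C > 0"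
    and "\<And>P. P \<noteq> 0 \<Longrightarrow> degree P \<le> k \<Longrightarrow>
           \<exists>m\<le>k. lead_dominant_comparable k K C P (mobius_poly k N m P)"
proof -
  obtain B where "B \<ge> 0" and B: "\<And>m P j. m \<le> k \<Longrightarrow>
      \<bar>real_of_int (coeff (reversed_shift k m P) j)\<bar> \<le> B * real_of_int (poly_height P)"
    using abs_coeff_reversed_shift_le by blast
  obtain K where "K > 0" and K: "\<And>P m. degree P \<le> k \<Longrightarrow>
      (\<And>l. l \<le> k \<Longrightarrow> \<bar>poly P (int l)\<bar> \<le> \<bar>poly P (int m)\<bar>) \<Longrightarrow>
      real_of_int (poly_height P) \<le> K * \<bar>real_of_int (poly P (int m))\<bar>"
    using poly_height_le_max_value_at_nodes by blast
  define N where "N = nat \<lceil>B * K\<rceil> + 1"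
  define C where "C = real N ^ k * (\<Sum>i\<le>k. real k ^ i)"
  have "N > 0" by (simp add: N_def)
  have "B * K \<le> real N" unfolding N_def by linarith
  have "C > 0"
    using \<open>N > 0\<close> member_le_sum[of 0 "{..k}" "\<lambda>i. real k ^ i"] unfolding C_def
    by (intro mult_pos_pos) auto
  have "\<exists>m\<le>k. lead_dominant_comparable k K C P (mobius_poly k N m P)"
    if "P \<noteq> 0" and "degree P \<le> k" for P
  proof -
    define f where "f l = \<bar>poly P (int l)\<bar>" for l
    have "Max (f ` {..k}) \<in> f ` {..k}" by (rule Max_in) auto
    then obtain m where "m \<le> k" and "f m = Max (f ` {..k})" by (metis atMost_iff imageE)
    then have max: "\<And>l. l \<le> k \<Longrightarrow> \<bar>poly P (int l)\<bar> \<le> \<bar>poly P (int m)\<bar>"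
      by (simp add: f_def)
    have "lead_dominant_comparable k K C P (mobius_poly k N m P)"
      unfolding C_def
      by (rule lead_dominant_comparable_mobius_poly[OF that \<open>m \<le> k\<close> \<open>N > 0\<close> \<open>K > 0\<close> \<open>B \<ge> 0\<close>
            B[OF \<open>m \<le> k\<close>] K[OF that(2) max] \<open>B * K \<le> real N\<close>])
    then show ?thesis using \<open>m \<le> k\<close> by blast
  qed
  then show thesis using that \<open>N > 0\<close> \<open>K > 0\<close> \<open>C > 0\<close> by blast
qed

section \<open>Transfer of approximation exponents\<close>

definition approx_polys :: "nat \<Rightarrow> real \<Rightarrow> real \<Rightarrow> int poly set" where
  "approx_polys k \<xi> \<omega> = {P. P \<noteq> 0 \<and> degree P \<le> k \<and>
     \<bar>rpoly P \<xi>\<bar> \<le> real_of_int (poly_height P) powr (- \<omega>)}"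

definition lead_approx_polys :: "nat \<Rightarrow> real \<Rightarrow> real \<Rightarrow> int poly set" where
  "lead_approx_polys k \<xi> \<omega> = {P \<in> approx_polys k \<xi> \<omega>. \<bar>coeff P k\<bar> = poly_height P}"

lemma omega_altdef: "omega k \<xi> = Sup {ereal \<omega> | \<omega>. infinite (approx_polys k \<xi> \<omega>)}"
  unfolding omega_def approx_polys_def ..

lemma omega_lead_altdef: "omega_lead k \<xi> = Sup {ereal \<omega> | \<omega>. infinite (lead_approx_polys k \<xi> \<omega>)}"
  unfolding omega_lead_def lead_approx_polys_def approx_polys_def by (simp add: conj_ac)

lemma omega_lead_le_omega: "omega_lead k \<xi> \<le> omega k \<xi>"
  unfolding omega_altdef omega_lead_altdef
  by (rule Sup_subset_mono) (auto simp: lead_approx_polys_def intro: infinite_super[rotated])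

lemma powr_neg_le_of_comparable:
  fixes h h' K C \<omega> :: real
  assumes "h > 0" and "h' > 0" and "K > 0" and "C > 0"
    and "h \<le> K * h'" and "h' \<le> C * h"
  shows "h powr (- \<omega>) \<le> (C powr \<omega> + K powr (- \<omega>)) * h' powr (- \<omega>)"
proof (cases "\<omega> \<ge> 0")
  case True
  have "h' / C \<le> h" using assms by (simp add: field_simps mult.commute)
  then have "h powr (- \<omega>) \<le> (h' / C) powr (- \<omega>)"
    by (intro powr_mono2') (use True assms in auto)
  also have "\<dots> = C powr \<omega> * h' powr (- \<omega>)"
    using assms by (simp add: powr_divide powr_minus_divide)
  also have "\<dots> \<le> (C powr \<omega> + K powr (- \<omega>)) * h' powr (- \<omega>)"
    by (intro mult_right_mono) auto
  finally show ?thesis .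
next
  case False
  have "h powr (- \<omega>) \<le> (K * h') powr (- \<omega>)"
    by (intro powr_mono2) (use False assms in auto)
  also have "\<dots> = K powr (- \<omega>) * h' powr (- \<omega>)"
    using assms by (simp add: powr_mult)
  also have "\<dots> \<le> (C powr \<omega> + K powr (- \<omega>)) * h' powr (- \<omega>)"
    by (intro mult_right_mono) auto
  finally show ?thesis .
qed

lemma infinite_approx_polys_absorb_const:
  assumes "infinite I" and "\<omega>' < \<omega>"
    and I: "\<And>Q. Q \<in> I \<Longrightarrow> Q \<noteq> 0 \<and> degree Q \<le> k \<and>
                 \<bar>rpoly Q x\<bar> \<le> c * real_of_int (poly_height Q) powr (- \<omega>)"
  shows "infinite (I \<inter> approx_polys k x \<omega>')"
proof -
  define B where "B = max c 1 powr (1 / (\<omega> - \<omega>'))"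
  have "I - {Q. degree Q \<le> k \<and> real_of_int (poly_height Q) \<le> B} \<subseteq> I \<inter> approx_polys k x \<omega>'"
  proof
    fix Q assume Q: "Q \<in> I - {Q. degree Q \<le> k \<and> real_of_int (poly_height Q) \<le> B}"
    define h where "h = real_of_int (poly_height Q)"
    have "Q \<noteq> 0" and "degree Q \<le> k" and bound: "\<bar>rpoly Q x\<bar> \<le> c * h powr (- \<omega>)"
      using I Q by (auto simp: h_def)
    then have "h > B" using Q by (auto simp: h_def)
    have "c \<le> B powr (\<omega> - \<omega>')"
      using \<open>\<omega>' < \<omega>\<close> by (simp add: B_def powr_powr)
    also have "\<dots> \<le> h powr (\<omega> - \<omega>')"
      using \<open>h > B\<close> \<open>\<omega>' < \<omega>\<close> by (intro powr_mono2) (auto simp: B_def)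
    finally have "c * h powr (- \<omega>) \<le> h powr (\<omega> - \<omega>') * h powr (- \<omega>)"
      by (intro mult_right_mono) auto
    also have "\<dots> = h powr (- \<omega>')"
      by (simp add: powr_add[symmetric])
    finally show "Q \<in> I \<inter> approx_polys k x \<omega>'"
      using Q bound \<open>Q \<noteq> 0\<close> \<open>degree Q \<le> k\<close> by (auto simp: approx_polys_def h_def)
  qed
  moreover have "infinite (I - {Q. degree Q \<le> k \<and> real_of_int (poly_height Q) \<le> B})"
    using assms(1) finite_poly_height_le by (rule Diff_infinite_finite[rotated])
  ultimately show ?thesis using infinite_super by blast
qed

lemma approx_mobius_poly:
  assumes "N > 0" and "K > 0" and "C > 0" and "\<xi> \<noteq> real m"
    and "P \<in> approx_polys k \<xi> \<omega>"
    and "lead_dominant_comparable k K C P (mobius_poly k N m P)"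
  shows "mobius_poly k N m P \<noteq> 0"
    and "\<bar>rpoly (mobius_poly k N m P) (mobius N m \<xi>)\<bar> \<le>
           (C powr \<omega> + K powr (- \<omega>)) / \<bar>\<xi> - real m\<bar> ^ k *
           real_of_int (poly_height (mobius_poly k N m P)) powr (- \<omega>)"
proof -
  define Q where "Q = mobius_poly k N m P"
  have "P \<noteq> 0" and deg: "degree P \<le> k"
    and approx: "\<bar>rpoly P \<xi>\<bar> \<le> real_of_int (poly_height P) powr (- \<omega>)"
    and HP: "real_of_int (poly_height P) \<le> K * real_of_int (poly_height Q)"
    and HQ: "real_of_int (poly_height Q) \<le> C * real_of_int (poly_height P)"
    using assms(5,6) by (auto simp: approx_polys_def lead_dominant_comparable_def Q_def)
  have "real_of_int (poly_height P) \<ge> 1" using poly_height_ge_1[OF \<open>P \<noteq> 0\<close>] by simp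
  then have "real_of_int (poly_height Q) > 0"
    using HP \<open>K > 0\<close> poly_height_nonneg[of Q] by (auto simp: zero_less_mult_iff le_less)
  then show "mobius_poly k N m P \<noteq> 0" by (auto simp: Q_def)
  have "\<bar>\<xi> - real m\<bar> ^ k > 0" using \<open>\<xi> \<noteq> real m\<close> by simp
  have "\<bar>rpoly Q (mobius N m \<xi>)\<bar> = \<bar>rpoly P \<xi>\<bar> / \<bar>\<xi> - real m\<bar> ^ k"
    using rpoly_mobius_poly[OF deg \<open>\<xi> \<noteq> real m\<close> \<open>N > 0\<close>] by (simp add: Q_def abs_divide power_abs)
  also have "\<dots> \<le> (C powr \<omega> + K powr (- \<omega>)) * real_of_int (poly_height Q) powr (- \<omega>) / \<bar>\<xi> - real m\<bar> ^ k"
    using order_trans[OF approx powr_neg_le_of_comparable[OF _ _ \<open>K > 0\<close> \<open>C > 0\<close> HP HQ]]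
      \<open>real_of_int (poly_height P) \<ge> 1\<close> \<open>real_of_int (poly_height Q) > 0\<close> \<open>\<bar>\<xi> - real m\<bar> ^ k > 0\<close>
    by (intro divide_right_mono) auto
  finally show "\<bar>rpoly (mobius_poly k N m P) (mobius N m \<xi>)\<bar> \<le>
      (C powr \<omega> + K powr (- \<omega>)) / \<bar>\<xi> - real m\<bar> ^ k *
      real_of_int (poly_height (mobius_poly k N m P)) powr (- \<omega>)"
    by (simp add: Q_def)
qed

lemma infinite_lead_approx_polys_mobius:
  assumes "N > 0" and "K > 0" and "C > 0"
    and comparable: "\<And>P. P \<noteq> 0 \<Longrightarrow> degree P \<le> k \<Longrightarrow>
                        \<exists>m\<le>k. lead_dominant_comparable k K C P (mobius_poly k N m P)"
    and "\<xi> \<notin> real ` {..k}" and "infinite (approx_polys k \<xi> \<omega>)" and "\<omega>' < \<omega>"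
  shows "\<exists>m\<le>k. infinite (lead_approx_polys k (mobius N m \<xi>) \<omega>')"
proof -
  define G where "G m = {P \<in> approx_polys k \<xi> \<omega>. lead_dominant_comparable k K C P (mobius_poly k N m P)}"
    for m
  have "approx_polys k \<xi> \<omega> \<subseteq> (\<Union>m\<le>k. G m)"
    using comparable by (auto simp: approx_polys_def G_def)
  then obtain m where "m \<le> k" and "infinite (G m)"
    using \<open>infinite (approx_polys k \<xi> \<omega>)\<close> by (metis finite_UN finite_atMost finite_subset atMost_iff)
  have "\<xi> \<noteq> real m" using \<open>\<xi> \<notin> real ` {..k}\<close> \<open>m \<le> k\<close> by auto
  define I where "I = mobius_poly k N m ` G m"
  have "G m \<subseteq> {P. degree P \<le> k}" by (auto simp: G_def approx_polys_def)
  then have "infinite I"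
    unfolding I_def using \<open>infinite (G m)\<close> inj_on_mobius_poly[OF \<open>N > 0\<close>]
    by (metis finite_imageD inj_on_subset)
  have I: "Q \<noteq> 0 \<and> degree Q \<le> k \<and> \<bar>coeff Q k\<bar> = poly_height Q \<and>
      \<bar>rpoly Q (mobius N m \<xi>)\<bar> \<le> (C powr \<omega> + K powr (- \<omega>)) / \<bar>\<xi> - real m\<bar> ^ k *
        real_of_int (poly_height Q) powr (- \<omega>)" if "Q \<in> I" for Q
    using that approx_mobius_poly[OF \<open>N > 0\<close> \<open>K > 0\<close> \<open>C > 0\<close> \<open>\<xi> \<noteq> real m\<close>] degree_mobius_poly
    by (auto simp: I_def G_def lead_dominant_comparable_def)
  have "infinite (I \<inter> approx_polys k (mobius N m \<xi>) \<omega>')"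
    using \<open>infinite I\<close> \<open>\<omega>' < \<omega>\<close> by (rule infinite_approx_polys_absorb_const) (use I in blast)
  moreover have "I \<inter> approx_polys k (mobius N m \<xi>) \<omega>' \<subseteq> lead_approx_polys k (mobius N m \<xi>) \<omega>'"
    using I by (auto simp: lead_approx_polys_def)
  ultimately show ?thesis using \<open>m \<le> k\<close> infinite_super by blast
qed

lemma omega_le_omega_lead_mobius:
  assumes "N > 0" and "K > 0" and "C > 0"
    and comparable: "\<And>P. P \<noteq> 0 \<Longrightarrow> degree P \<le> k \<Longrightarrow>
                        \<exists>m\<le>k. lead_dominant_comparable k K C P (mobius_poly k N m P)"
    and "\<xi> \<notin> real ` {..k}"
  shows "\<exists>m\<le>k. omega k \<xi> \<le> omega_lead k (mobius N m \<xi>)"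
proof (rule ccontr)
  define s where "s = Max ((\<lambda>m. omega_lead k (mobius N m \<xi>)) ` {..k})"
  assume "\<not> ?thesis"
  then have "s < omega k \<xi>"
    unfolding s_def by (subst Max_less_iff) auto
  then obtain \<omega> where "s < ereal \<omega>" and "infinite (approx_polys k \<xi> \<omega>)"
    unfolding omega_altdef by (auto simp: less_Sup_iff)
  then obtain r where "s < ereal r" and "r < \<omega>"
    using ereal_dense2 by (metis ereal_less(2) less_ereal.simps(1))
  obtain m where "m \<le> k" and "infinite (lead_approx_polys k (mobius N m \<xi>) r)"
    using infinite_lead_approx_polys_mobius[OF assms \<open>infinite (approx_polys k \<xi> \<omega>)\<close> \<open>r < \<omega>\<close>]
    by blast
  then have "ereal r \<le> omega_lead k (mobius N m \<xi>)"
    unfolding omega_lead_altdef by (auto intro: Sup_upper)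
  also have "\<dots> \<le> s"
    unfolding s_def using \<open>m \<le> k\<close> by (intro Max_ge) auto
  finally show False using \<open>s < ereal r\<close> by simp
qed

section \<open>Hausdorff null sets\<close>

definition hausdorff_null :: "real \<Rightarrow> real set \<Rightarrow> bool" where
  "hausdorff_null s A \<longleftrightarrow> (\<forall>\<delta>>0. \<forall>\<epsilon>>0. \<exists>U :: nat \<Rightarrow> real set. A \<subseteq> (\<Union>i. U i) \<and>
     (\<forall>i. bounded (U i) \<and> diameter (U i) \<le> \<delta>) \<and> (\<Sum>i. ennreal (diameter (U i) powr s)) < ennreal \<epsilon>)"

lemma hausdorff_nullD:
  assumes "hausdorff_null s A" and "\<delta> > 0" and "\<epsilon> > 0"
  shows "\<exists>U :: nat \<Rightarrow> real set. A \<subseteq> (\<Union>i. U i) \<and>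
     (\<forall>i. bounded (U i) \<and> diameter (U i) \<le> \<delta>) \<and> (\<Sum>i. ennreal (diameter (U i) powr s)) < ennreal \<epsilon>"
  using assms unfolding hausdorff_null_def by blast

lemma hausdorff_pre_eq_0_iff:
  "hausdorff_pre s \<delta> A = 0 \<longleftrightarrow> (\<forall>\<epsilon>>0. \<exists>U :: nat \<Rightarrow> real set. A \<subseteq> (\<Union>i. U i) \<and>
     (\<forall>i. bounded (U i) \<and> diameter (U i) \<le> \<delta>) \<and> (\<Sum>i. ennreal (diameter (U i) powr s)) < ennreal \<epsilon>)"
proof -
  define cover where
    "cover U \<longleftrightarrow> A \<subseteq> (\<Union>i. U i) \<and> (\<forall>i. bounded (U i) \<and> diameter (U i) \<le> \<delta>)"
    for U :: "nat \<Rightarrow> real set"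
  define \<sigma> where "\<sigma> U = (\<Sum>i. ennreal (diameter (U i) powr s))" for U :: "nat \<Rightarrow> real set"
  have "hausdorff_pre s \<delta> A = Inf (\<sigma> ` {U. cover U})"
    unfolding hausdorff_pre_def cover_def \<sigma>_def image_Collect ..
  then have "hausdorff_pre s \<delta> A = 0 \<longleftrightarrow> (\<forall>x>0. \<exists>U. cover U \<and> \<sigma> U < x)"
    unfolding bot_ennreal[symmetric] Inf_eq_bot_iff by auto
  also have "\<dots> \<longleftrightarrow> (\<forall>\<epsilon>>0. \<exists>U. cover U \<and> \<sigma> U < ennreal \<epsilon>)"
  proof
    assume small: "\<forall>\<epsilon>>0. \<exists>U. cover U \<and> \<sigma> U < ennreal \<epsilon>"
    show "\<forall>x>0. \<exists>U. cover U \<and> \<sigma> U < x"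
    proof (intro allI impI)
      fix x :: ennreal assume "x > 0"
      obtain \<epsilon> where "\<epsilon> > 0" and "ennreal \<epsilon> \<le> x"
      proof (cases x rule: ennreal_cases)
        case (real r)
        then show ?thesis using that[of r] \<open>x > 0\<close> by auto
      next
        case top
        then show ?thesis using that[of 1] by simp
      qed
      then show "\<exists>U. cover U \<and> \<sigma> U < x" using small less_le_trans by blast
    qed
  qed simp
  finally show ?thesis by (simp add: cover_def \<sigma>_def)
qed

lemma hausdorff_measure_eq_0_iff: "hausdorff_measure s A = 0 \<longleftrightarrow> hausdorff_null s A"
proof -
  have "hausdorff_measure s A = 0 \<longleftrightarrow> (\<forall>\<delta>\<in>{0<..}. hausdorff_pre s \<delta> A = 0)"
    unfolding hausdorff_measure_def bot_ennreal[symmetric] by (rule SUP_bot_conv(1))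
  then show ?thesis
    unfolding hausdorff_null_def by (simp only: hausdorff_pre_eq_0_iff greaterThan_iff Ball_def)
qed

lemma hausdorff_null_subset: "hausdorff_null s A \<Longrightarrow> B \<subseteq> A \<Longrightarrow> hausdorff_null s B"
  unfolding hausdorff_null_def by (meson order_trans)

lemma hausdorff_null_countable:
  assumes "s > 0" and "countable A"
  shows "hausdorff_null s A"
proof -
  have "hausdorff_null s (range f)" for f :: "nat \<Rightarrow> real"
    unfolding hausdorff_null_def
  proof (intro allI impI)
    fix \<delta> \<epsilon> :: real assume "\<delta> > 0" "\<epsilon> > 0"
    then show "\<exists>U :: nat \<Rightarrow> real set. range f \<subseteq> (\<Union>i. U i) \<and> (\<forall>i. bounded (U i) \<and> diameter (U i) \<le> \<delta>)
        \<and> (\<Sum>i. ennreal (diameter (U i) powr s)) < ennreal \<epsilon>"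
      by (intro exI[of _ "\<lambda>i. {f i}"]) auto
  qed
  then show ?thesis
    using subset_range_from_nat_into[OF \<open>countable A\<close>] by (rule hausdorff_null_subset)
qed

lemma hausdorff_null_UN:
  fixes A :: "nat \<Rightarrow> real set"
  assumes "\<And>n. hausdorff_null s (A n)"
  shows "hausdorff_null s (\<Union>n. A n)"
  unfolding hausdorff_null_def
proof (intro allI impI)
  fix \<delta> \<epsilon> :: real assume "\<delta> > 0" "\<epsilon> > 0"
  then have "\<forall>n. \<exists>U :: nat \<Rightarrow> real set. A n \<subseteq> (\<Union>i. U i) \<and>
     (\<forall>i. bounded (U i) \<and> diameter (U i) \<le> \<delta>) \<and>
     (\<Sum>i. ennreal (diameter (U i) powr s)) < ennreal (\<epsilon> / 4 * (1/2) ^ n)"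
    using assms unfolding hausdorff_null_def by simp
  then obtain U :: "nat \<Rightarrow> nat \<Rightarrow> real set" where
    cover: "\<And>n. A n \<subseteq> (\<Union>i. U n i)" and
    small: "\<And>n i. bounded (U n i) \<and> diameter (U n i) \<le> \<delta>" and
    sum: "\<And>n. (\<Sum>i. ennreal (diameter (U n i) powr s)) < ennreal (\<epsilon> / 4 * (1/2) ^ n)"
    by metis
  define V where "V i = (case prod_decode i of (n, j) \<Rightarrow> U n j)" for i
  have "(\<Union>n. A n) \<subseteq> (\<Union>i. V i)"
  proof
    fix x assume "x \<in> (\<Union>n. A n)"
    then obtain n j where "x \<in> U n j" using cover by blast
    then have "x \<in> V (prod_encode (n, j))" by (simp add: V_def)
    then show "x \<in> (\<Union>i. V i)" by blast
  qed
  moreover have "bounded (V i) \<and> diameter (V i) \<le> \<delta>" for i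
    unfolding V_def using small by (simp split: prod.split)
  moreover have "(\<Sum>i. ennreal (diameter (V i) powr s)) < ennreal \<epsilon>"
  proof -
    define g where "g = (\<lambda>(n, j). ennreal (diameter (U n j) powr s))"
    have "ennreal (diameter (V i) powr s) = g (prod_decode i)" for i
      by (simp add: V_def g_def split: prod.split)
    then have "(\<Sum>i. ennreal (diameter (V i) powr s)) = (\<Sum>i. g (prod_decode i))"
      by simp
    also have "\<dots> = (\<Sum>n. \<Sum>j. ennreal (diameter (U n j) powr s))"
      by (rule suminf_ennreal_2dimen) (simp add: g_def)
    also have "\<dots> \<le> (\<Sum>n. ennreal (\<epsilon> / 4 * (1/2) ^ n))"
      by (intro suminf_le) (use sum in \<open>auto simp: less_imp_le intro: summableI\<close>)
    also have "\<dots> = ennreal (\<Sum>n. \<epsilon> / 4 * (1/2) ^ n)"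
      by (rule suminf_ennreal2) (use \<open>\<epsilon> > 0\<close> in \<open>auto intro: summable_mult summable_geometric\<close>)
    also have "(\<Sum>n. \<epsilon> / 4 * (1/2::real) ^ n) = \<epsilon> / 2"
      by (subst suminf_mult[OF summable_geometric]) (auto simp: suminf_geometric)
    also have "ennreal (\<epsilon> / 2) < ennreal \<epsilon>"
      using \<open>\<epsilon> > 0\<close> by (simp add: ennreal_lessI)
    finally show ?thesis .
  qed
  ultimately show "\<exists>U :: nat \<Rightarrow> real set. (\<Union>n. A n) \<subseteq> (\<Union>i. U i) \<and>
     (\<forall>i. bounded (U i) \<and> diameter (U i) \<le> \<delta>) \<and> (\<Sum>i. ennreal (diameter (U i) powr s)) < ennreal \<epsilon>"
    by blast
qed

lemma hausdorff_null_Un: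
  assumes "hausdorff_null s A" and "hausdorff_null s B"
  shows "hausdorff_null s (A \<union> B)"
proof -
  have "A \<union> B = (\<Union>n::nat. if n = 0 then A else B)" by (auto split: if_splits)
  also have "hausdorff_null s \<dots>" by (rule hausdorff_null_UN) (use assms in auto)
  finally show ?thesis .
qed

lemma bounded_diameter_lipschitz_image:
  fixes f :: "real \<Rightarrow> real"
  assumes "L-lipschitz_on A f" and "bounded U"
  shows "bounded (f ` (U \<inter> A)) \<and> diameter (f ` (U \<inter> A)) \<le> L * diameter U"
proof (cases "U \<inter> A = {}")
  case True
  then show ?thesis using lipschitz_on_nonneg[OF assms(1)] diameter_ge_0[OF assms(2)] by simp
next
  case False
  then obtain a where a: "a \<in> U \<inter> A" by blast
  have close: "\<bar>f x1 - f x2\<bar> \<le> L * diameter U" if "x1 \<in> U \<inter> A" "x2 \<in> U \<inter> A" for x1 x2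
  proof -
    have "\<bar>f x1 - f x2\<bar> \<le> L * dist x1 x2"
      using lipschitz_onD[OF assms(1)] that by (simp add: dist_real_def)
    also have "\<dots> \<le> L * diameter U"
      using diameter_bounded_bound[OF assms(2)] lipschitz_on_nonneg[OF assms(1)] that
      by (intro mult_left_mono) auto
    finally show ?thesis .
  qed
  have "bounded (f ` (U \<inter> A))"
    unfolding bounded_def using close a by (auto simp: dist_real_def)
  moreover have "diameter (f ` (U \<inter> A)) \<le> L * diameter U"
    by (rule diameter_le) (use a close in auto)
  ultimately show ?thesis ..
qed

lemma hausdorff_null_lipschitz_image:
  fixes f :: "real \<Rightarrow> real"
  assumes "s > 0" and "L-lipschitz_on A f" and "hausdorff_null s A"
  shows "hausdorff_null s (f ` A)"
  unfolding hausdorff_null_def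
proof (intro allI impI)
  fix \<delta> \<epsilon> :: real assume "\<delta> > 0" "\<epsilon> > 0"
  define L' where "L' = L + 1"
  have "L' > 0" using lipschitz_on_nonneg[OF assms(2)] by (simp add: L'_def)
  have lip: "L'-lipschitz_on A f"
    using assms(2) by (rule lipschitz_on_le) (simp add: L'_def)
  have "\<delta> / L' > 0" and "\<epsilon> / L' powr s > 0" using \<open>\<delta> > 0\<close> \<open>\<epsilon> > 0\<close> \<open>L' > 0\<close> by simp_all
  then obtain U :: "nat \<Rightarrow> real set" where cover: "A \<subseteq> (\<Union>i. U i)"
    and small: "\<And>i. bounded (U i) \<and> diameter (U i) \<le> \<delta> / L'"
    and sum: "(\<Sum>i. ennreal (diameter (U i) powr s)) < ennreal (\<epsilon> / L' powr s)"
    using hausdorff_nullD[OF assms(3)] by blast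
  define V where "V i = f ` (U i \<inter> A)" for i
  have V: "bounded (V i) \<and> diameter (V i) \<le> L' * diameter (U i)" for i
    unfolding V_def using bounded_diameter_lipschitz_image[OF lip, of "U i"] small[of i] by blast
  have "f ` A \<subseteq> (\<Union>i. V i)" unfolding V_def using cover by blast
  moreover have "bounded (V i) \<and> diameter (V i) \<le> \<delta>" for i
  proof -
    have "L' * diameter (U i) \<le> L' * (\<delta> / L')"
      using small[of i] \<open>L' > 0\<close> by (intro mult_left_mono) auto
    then show ?thesis using V[of i] \<open>L' > 0\<close> by simp
  qed
  moreover have "(\<Sum>i. ennreal (diameter (V i) powr s)) < ennreal \<epsilon>"
  proof -
    have "ennreal (diameter (V i) powr s) \<le> ennreal (L' powr s) * ennreal (diameter (U i) powr s)" for i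
    proof -
      have "diameter (V i) powr s \<le> (L' * diameter (U i)) powr s"
        using V[of i] \<open>s > 0\<close> by (intro powr_mono2) (auto simp: diameter_ge_0)
      also have "\<dots> = L' powr s * diameter (U i) powr s"
        using \<open>L' > 0\<close> small[of i] by (simp add: powr_mult diameter_ge_0)
      finally show ?thesis by (simp add: ennreal_mult[symmetric] ennreal_leI)
    qed
    then have "(\<Sum>i. ennreal (diameter (V i) powr s)) \<le> (\<Sum>i. ennreal (L' powr s) * ennreal (diameter (U i) powr s))"
      by (intro suminf_le) (auto intro: summableI)
    also have "\<dots> = ennreal (L' powr s) * (\<Sum>i. ennreal (diameter (U i) powr s))"
      by (rule ennreal_suminf_cmult)
    also have "\<dots> < ennreal (L' powr s) * ennreal (\<epsilon> / L' powr s)"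
      using sum \<open>L' > 0\<close> by (intro ennreal_mult_strict_left_mono) auto
    also have "\<dots> = ennreal \<epsilon>"
      using \<open>L' > 0\<close> \<open>\<epsilon> > 0\<close> by (simp add: ennreal_mult[symmetric])
    finally show ?thesis .
  qed
  ultimately show "\<exists>U :: nat \<Rightarrow> real set. f ` A \<subseteq> (\<Union>i. U i) \<and>
     (\<forall>i. bounded (U i) \<and> diameter (U i) \<le> \<delta>) \<and> (\<Sum>i. ennreal (diameter (U i) powr s)) < ennreal \<epsilon>"
    by blast
qed

section \<open>Comparison of the exceptional sets\<close>

lemma lipschitz_on_mobius_inverse:
  assumes "r > 0" and "N > 0"
  shows "(1 / r\<^sup>2)-lipschitz_on {y. r \<le> \<bar>y\<bar>} (\<lambda>y. real m + 1 / (real N * y))"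
proof (rule lipschitz_onI)
  fix x y assume "x \<in> {y. r \<le> \<bar>y\<bar>}" and "y \<in> {y. r \<le> \<bar>y\<bar>}"
  then have x: "r \<le> \<bar>x\<bar>" and y: "r \<le> \<bar>y\<bar>" by auto
  then have "x \<noteq> 0" and "y \<noteq> 0" using \<open>r > 0\<close> by auto
  have "r\<^sup>2 \<le> \<bar>x\<bar> * \<bar>y\<bar>"
    unfolding power2_eq_square using x y \<open>r > 0\<close> by (intro mult_mono) auto
  also have "\<dots> \<le> real N * \<bar>x\<bar> * \<bar>y\<bar>"
    using \<open>N > 0\<close> mult_right_mono[of 1 "real N" "\<bar>x\<bar> * \<bar>y\<bar>"] by (simp add: mult.assoc)
  finally have denom: "r\<^sup>2 \<le> real N * \<bar>x\<bar> * \<bar>y\<bar>" .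
  have "(real m + 1 / (real N * x)) - (real m + 1 / (real N * y)) = (y - x) / (real N * x * y)"
    using \<open>x \<noteq> 0\<close> \<open>y \<noteq> 0\<close> \<open>N > 0\<close> by (simp add: field_simps)
  then have "dist (real m + 1 / (real N * x)) (real m + 1 / (real N * y)) = \<bar>x - y\<bar> / (real N * \<bar>x\<bar> * \<bar>y\<bar>)"
    by (simp add: dist_real_def abs_divide abs_mult abs_minus_commute)
  also have "\<dots> \<le> \<bar>x - y\<bar> / r\<^sup>2"
    using denom \<open>x \<noteq> 0\<close> \<open>y \<noteq> 0\<close> \<open>N > 0\<close> \<open>r > 0\<close> by (intro divide_left_mono mult_pos_pos) auto
  finally show "dist (real m + 1 / (real N * x)) (real m + 1 / (real N * y)) \<le> 1 / r\<^sup>2 * dist x y"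
    by (simp add: dist_real_def)
qed simp

lemma hausdorff_null_omega_iff_omega_lead:
  fixes R :: "ereal \<Rightarrow> bool"
  assumes "s > 0" and mono: "\<And>x y. x \<le> y \<Longrightarrow> R x \<Longrightarrow> R y"
  shows "hausdorff_null s {\<xi>. R (omega k \<xi>)} \<longleftrightarrow> hausdorff_null s {\<xi>. R (omega_lead k \<xi>)}"
proof
  show "hausdorff_null s {\<xi>. R (omega_lead k \<xi>)}" if "hausdorff_null s {\<xi>. R (omega k \<xi>)}"
    using that by (rule hausdorff_null_subset) (auto intro: mono[OF omega_lead_le_omega])
next
  define S where "S = {\<xi>. R (omega k \<xi>)}"
  define SL where "SL = {\<xi>. R (omega_lead k \<xi>)}"
  assume "hausdorff_null s SL"
  obtain N K C where "N > 0" "K > 0" "C > 0" and comparable: "\<And>P. P \<noteq> 0 \<Longrightarrow> degree P \<le> k \<Longrightarrow>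
      \<exists>m\<le>k. lead_dominant_comparable k K C P (mobius_poly k N m P)"
    using exists_lead_dominant_mobius_poly by blast
  define piece where
    "piece m n = (\<lambda>y. real m + 1 / (real N * y)) ` (SL \<inter> {y. 1 / real (Suc n) \<le> \<bar>y\<bar>})" for m n :: nat
  have "S \<subseteq> real ` {..k} \<union> (\<Union>m. \<Union>n. piece m n)"
  proof
    fix \<xi> assume "\<xi> \<in> S"
    show "\<xi> \<in> real ` {..k} \<union> (\<Union>m. \<Union>n. piece m n)"
    proof (cases "\<xi> \<in> real ` {..k}")
      case False
      then obtain m where "m \<le> k" and "omega k \<xi> \<le> omega_lead k (mobius N m \<xi>)"
        using omega_le_omega_lead_mobius[OF \<open>N > 0\<close> \<open>K > 0\<close> \<open>C > 0\<close> comparable] by blast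
      then have "mobius N m \<xi> \<in> SL"
        using \<open>\<xi> \<in> S\<close> mono by (auto simp: S_def SL_def)
      have "\<xi> \<noteq> real m" using False \<open>m \<le> k\<close> by auto
      then have "\<bar>mobius N m \<xi>\<bar> > 0" using \<open>N > 0\<close> by (simp add: mobius_eq_0_iff)
      then obtain n where "inverse (real (Suc n)) < \<bar>mobius N m \<xi>\<bar>"
        using reals_Archimedean by blast
      then have "\<xi> \<in> piece m n"
        unfolding piece_def using \<open>mobius N m \<xi> \<in> SL\<close> mobius_inverse[OF \<open>N > 0\<close> \<open>\<xi> \<noteq> real m\<close>]
        by (intro image_eqI[of _ _ "mobius N m \<xi>"]) (auto simp: inverse_eq_divide)
      then show ?thesis by blast
    qed simp
  qed
  moreover have pieces: "hausdorff_null s (piece m n)" for m n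
    unfolding piece_def
  proof (rule hausdorff_null_lipschitz_image[OF \<open>s > 0\<close>])
    show "(1 / (1 / real (Suc n))\<^sup>2)-lipschitz_on (SL \<inter> {y. 1 / real (Suc n) \<le> \<bar>y\<bar>})
        (\<lambda>y. real m + 1 / (real N * y))"
      by (rule lipschitz_on_subset[OF lipschitz_on_mobius_inverse]) (use \<open>N > 0\<close> in auto)
    show "hausdorff_null s (SL \<inter> {y. 1 / real (Suc n) \<le> \<bar>y\<bar>})"
      using \<open>hausdorff_null s SL\<close> by (rule hausdorff_null_subset) auto
  qed
  moreover have "hausdorff_null s (real ` {..k} \<union> (\<Union>m. \<Union>n. piece m n))"
    by (intro hausdorff_null_Un[OF hausdorff_null_countable[OF \<open>s > 0\<close>]] hausdorff_null_UN)
       (simp_all add: pieces)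
  ultimately show "hausdorff_null s S"
    using hausdorff_null_subset by blast
qed

theorem mainTheorem3:
  fixes k :: nat and w :: real
  assumes "k \<ge> 1"
  shows "hausdorff_dim {\<xi>. omega k \<xi> \<ge> ereal w} = hausdorff_dim {\<xi>. omega_lead k \<xi> \<ge> ereal w}
       \<and> hausdorff_dim {\<xi>. omega k \<xi> > ereal w} = hausdorff_dim {\<xi>. omega_lead k \<xi> > ereal w}"
proof -
  have null_sets_eq: "{s. s > 0 \<and> hausdorff_measure s {\<xi>. R (omega k \<xi>)} = 0} =
        {s. s > 0 \<and> hausdorff_measure s {\<xi>. R (omega_lead k \<xi>)} = 0}"
    if "\<And>x y. x \<le> y \<Longrightarrow> R x \<Longrightarrow> R y" for R
    using hausdorff_null_omega_iff_omega_lead[where R = R and k = k, OF _ that]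
    by (auto simp: hausdorff_measure_eq_0_iff)
  have "\<And>x y. x \<le> y \<Longrightarrow> ereal w \<le> x \<Longrightarrow> ereal w \<le> y" by (rule order_trans)
  moreover have "\<And>x y. x \<le> y \<Longrightarrow> ereal w < x \<Longrightarrow> ereal w < y" by (rule less_le_trans)
  ultimately show ?thesis
    unfolding hausdorff_dim_def by (simp add: null_sets_eq)
qed

end
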